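(* Let each $f_\xi:\mathbb{R}^d\to\mathbb{R}$ ($\xi\sim\mathcal{D}$) be differentiable and $\mu$-strongly convex with $\mu>0$, let $f=\mathbb{E}_{\xi\sim\mathcal{D}}[f_\xi]$ with minimizer $x_\star$, and suppose there exists $\delta\ge0$ with $\mathbb{E}_{\xi\sim\mathcal{D}}\|\nabla f_\xi(x)-\nabla f(x)-\nabla f_\xi(x_\star)\|^2\le\delta^2\|x-x_\star\|^2$ for all $x\in\mathbb{R}^d$. Consider SPPM-GC: from arbitrary $x_0\in\mathbb{R}^d$, sample $\xi_k\sim\mathcal{D}$ independently and set $x_{k+1}=\operatorname{prox}_{\gamma f_{\xi_k}}\big(x_k+\gamma(\nabla f_{\xi_k}(x_k)-\nabla f(x_k))\big)$. Then for any $\gamma>0$ and all $k\ge0$, $$\mathbb{E}\|x_k-x_\star\|^2\le\left(\frac{1+\gamma^2\delta^2}{(1+\gamma\mu)^2}\right)^k\|x_0-x_\star\|^2.$$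
   Context: $\operatorname{prox}_{\gamma\phi}(y):=\arg\min_{x\in\mathbb{R}^d}\{\phi(x)+\frac{1}{2\gamma}\|x-y\|^2\}$. $\mu$-strong convexity of $g$: $g(y)+\langle\nabla g(y),x-y\rangle+\frac{\mu}{2}\|x-y\|^2\le g(x)$ for all $x,y$. $\nabla f=\mathbb{E}[\nabla f_\xi]$. *)

theory Defs
  imports "HOL-Probability.Probability"
begin

definition prox :: "real \<Rightarrow> ('a::real_normed_vector \<Rightarrow> real) \<Rightarrow> 'a \<Rightarrow> 'a" where
  "prox \<gamma> \<phi> y = (SOME x. \<forall>z. \<phi> x + (1 / (2 * \<gamma>)) * (norm (x - y))\<^sup>2
                              \<le> \<phi> z + (1 / (2 * \<gamma>)) * (norm (z - y))\<^sup>2)"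

primrec sppm_gc ::
  "('b \<Rightarrow> 'a::real_inner \<Rightarrow> real) \<Rightarrow> ('b \<Rightarrow> 'a \<Rightarrow> 'a) \<Rightarrow> ('a \<Rightarrow> 'a) \<Rightarrow> real \<Rightarrow> 'a
    \<Rightarrow> (nat \<Rightarrow> 'b) \<Rightarrow> nat \<Rightarrow> 'a" where
  "sppm_gc F gradF gradf \<gamma> x0 \<omega> 0 = x0"
| "sppm_gc F gradF gradf \<gamma> x0 \<omega> (Suc k) =
     (let xk = sppm_gc F gradF gradf \<gamma> x0 \<omega> k
      in prox \<gamma> (F (\<omega> k)) (xk + \<gamma> *\<^sub>R (gradF (\<omega> k) xk - gradf xk)))"

end

theory Submission
  imports Defs
begin

text \<open>The proximal point p = prox_{\<gamma> f_\<xi>}(y) is characterised by p + \<gamma> \<nabla>f_\<xi>(p) = y, and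
  strong monotonicity of \<nabla>f_\<xi> makes the map y \<mapsto> p a (1 + \<gamma>\<mu>)-contraction relative to
  any reference point q, measured against q + \<gamma> \<nabla>f_\<xi>(q). Taking q = x\<star>, one SPPM-GC step gives
  (1 + \<gamma>\<mu>) \<parallel>x_{k+1} - x\<star>\<parallel> \<le> \<parallel>(x_k - x\<star>) + \<gamma> v\<parallel> with
  v = \<nabla>f_\<xi>(x_k) - \<nabla>f(x_k) - \<nabla>f_\<xi>(x\<star>). Since \<nabla>f(x\<star>) = 0 the noise v has mean zero, so in
  expectation the cross term vanishes and the gradient-similarity bound controls E\<parallel>v\<parallel>^2 by
  \<delta>^2 \<parallel>x_k - x\<star>\<parallel>^2. Iterating over the product of the sample spaces (Fubini in the last
  coordinate) gives the geometric rate.\<close>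

lemma power2_norm_add:
  fixes a b :: "'a::real_inner"
  shows "(norm (a + b))\<^sup>2 = (norm a)\<^sup>2 + 2 * (a \<bullet> b) + (norm b)\<^sup>2"
  by (simp add: power2_norm_eq_inner inner_add_left inner_add_right inner_commute)

lemma strongly_convex_gradient_monotone:
  fixes \<phi> :: "'a::real_inner \<Rightarrow> real" and G :: "'a \<Rightarrow> 'a"
  assumes sc: "\<And>x y. \<phi> y + G y \<bullet> (x - y) + \<mu> / 2 * (norm (x - y))\<^sup>2 \<le> \<phi> x"
  shows "\<mu> * (norm (a - b))\<^sup>2 \<le> (G a - G b) \<bullet> (a - b)"
proof -
  have "\<phi> b + G b \<bullet> (a - b) + \<mu> / 2 * (norm (a - b))\<^sup>2 \<le> \<phi> a"
    and "\<phi> a + G a \<bullet> (b - a) + \<mu> / 2 * (norm (b - a))\<^sup>2 \<le> \<phi> b"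
    by (rule sc)+
  then show ?thesis
    by (simp add: norm_minus_commute inner_diff_left inner_diff_right)
qed

lemma strongly_convex_prox_objective_has_minimizer:
  fixes \<phi> :: "'a::euclidean_space \<Rightarrow> real" and G :: "'a \<Rightarrow> 'a"
  assumes sc: "\<And>x y. \<phi> y + G y \<bullet> (x - y) + \<mu> / 2 * (norm (x - y))\<^sup>2 \<le> \<phi> x"
    and cont: "continuous_on UNIV \<phi>"
    and mu: "\<mu> > 0" and gam: "\<gamma> > 0"
  shows "\<exists>p. \<forall>z. \<phi> p + 1 / (2 * \<gamma>) * (norm (p - y))\<^sup>2 \<le> \<phi> z + 1 / (2 * \<gamma>) * (norm (z - y))\<^sup>2"
proof -
  define \<psi> where "\<psi> z = \<phi> z + 1 / (2 * \<gamma>) * (norm (z - y))\<^sup>2" for z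
  have cont\<psi>: "continuous_on UNIV \<psi>"
    unfolding \<psi>_def by (intro continuous_intros cont)
  define S where "S = {z. \<psi> z \<le> \<psi> y}"
  have "closed S"
    unfolding S_def by (rule closed_Collect_le[OF cont\<psi>]) (intro continuous_intros)
  moreover have "S \<subseteq> cball y (2 * norm (G y) / \<mu>)"
  proof
    fix z assume "z \<in> S"
    moreover have "0 \<le> 1 / (2 * \<gamma>) * (norm (z - y))\<^sup>2" using gam by simp
    ultimately have "\<phi> z \<le> \<phi> y" by (simp add: S_def \<psi>_def)
    moreover have "\<phi> y + G y \<bullet> (z - y) + \<mu> / 2 * (norm (z - y))\<^sup>2 \<le> \<phi> z" by (rule sc)
    moreover have "- (norm (G y) * norm (z - y)) \<le> G y \<bullet> (z - y)"
      using norm_cauchy_schwarz[of "- G y" "z - y"] by simp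
    ultimately have "(\<mu> / 2 * norm (z - y)) * norm (z - y) \<le> norm (G y) * norm (z - y)"
      by (simp add: power2_eq_square mult.assoc)
    then have "\<mu> / 2 * norm (z - y) \<le> norm (G y)"
      by (cases "z = y") (auto dest: mult_right_le_imp_le)
    then show "z \<in> cball y (2 * norm (G y) / \<mu>)"
      using mu by (simp add: dist_norm norm_minus_commute field_simps)
  qed
  ultimately have "compact S"
    using compact_eq_bounded_closed bounded_cball bounded_subset by blast
  moreover have "y \<in> S" by (simp add: S_def)
  ultimately obtain p where "p \<in> S" "\<forall>z\<in>S. \<psi> p \<le> \<psi> z"
    using continuous_attains_inf[of S \<psi>] continuous_on_subset[OF cont\<psi>] by blast
  then have "\<psi> p \<le> \<psi> z" for z
    by (cases "z \<in> S") (auto simp: S_def)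
  then show ?thesis unfolding \<psi>_def by blast
qed

lemma prox_objective_minimizer_stationary:
  fixes \<phi> :: "'a::real_inner \<Rightarrow> real" and G :: "'a \<Rightarrow> 'a"
  assumes diff: "(\<phi> has_derivative (\<lambda>h. G p \<bullet> h)) (at p)"
    and gam: "\<gamma> > 0"
    and min: "\<forall>z. \<phi> p + 1 / (2 * \<gamma>) * (norm (p - y))\<^sup>2 \<le> \<phi> z + 1 / (2 * \<gamma>) * (norm (z - y))\<^sup>2"
  shows "p + \<gamma> *\<^sub>R G p = y"
proof -
  have "((\<lambda>z. (z - y) \<bullet> (z - y)) has_derivative (\<lambda>h. (p - y) \<bullet> h + h \<bullet> (p - y))) (at p)"
    by (auto intro!: derivative_eq_intros)
  then have "((\<lambda>z. (norm (z - y))\<^sup>2) has_derivative (\<lambda>h. 2 * ((p - y) \<bullet> h))) (at p)"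
    by (simp add: power2_norm_eq_inner inner_commute)
  then have "((\<lambda>z. \<phi> z + 1 / (2 * \<gamma>) * (norm (z - y))\<^sup>2) has_derivative
        (\<lambda>h. G p \<bullet> h + 1 / (2 * \<gamma>) * (2 * ((p - y) \<bullet> h)))) (at p)"
    by (intro has_derivative_add has_derivative_mult_right diff)
  from differential_zero_maxmin[OF UNIV_I open_UNIV this] min
  have "(\<lambda>h. G p \<bullet> h + 1 / (2 * \<gamma>) * (2 * ((p - y) \<bullet> h))) = (\<lambda>h. 0)" by blast
  then have "G p \<bullet> h + 1 / (2 * \<gamma>) * (2 * ((p - y) \<bullet> h)) = 0" for h
    by (rule fun_cong)
  then have "(G p + (1 / \<gamma>) *\<^sub>R (p - y)) \<bullet> h = 0" for h
    by (simp add: inner_add_left)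
  then have "G p + (1 / \<gamma>) *\<^sub>R (p - y) = 0" by (metis inner_eq_zero_iff)
  then have "\<gamma> *\<^sub>R (G p + (1 / \<gamma>) *\<^sub>R (p - y)) = 0" by simp
  then show ?thesis using gam by (simp add: scaleR_add_right algebra_simps)
qed

lemma prox_add_gradient:
  fixes \<phi> :: "'a::euclidean_space \<Rightarrow> real" and G :: "'a \<Rightarrow> 'a"
  assumes sc: "\<And>x y. \<phi> y + G y \<bullet> (x - y) + \<mu> / 2 * (norm (x - y))\<^sup>2 \<le> \<phi> x"
    and diff: "\<And>x. (\<phi> has_derivative (\<lambda>h. G x \<bullet> h)) (at x)"
    and mu: "\<mu> > 0" and gam: "\<gamma> > 0"
  shows "prox \<gamma> \<phi> y + \<gamma> *\<^sub>R G (prox \<gamma> \<phi> y) = y"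
proof -
  have "continuous_on UNIV \<phi>"
    by (rule has_derivative_continuous_on) (use diff in auto)
  from strongly_convex_prox_objective_has_minimizer[OF sc this mu gam]
  have "\<forall>z. \<phi> (prox \<gamma> \<phi> y) + 1 / (2 * \<gamma>) * (norm (prox \<gamma> \<phi> y - y))\<^sup>2
      \<le> \<phi> z + 1 / (2 * \<gamma>) * (norm (z - y))\<^sup>2"
    unfolding prox_def by (rule someI_ex)
  then show ?thesis
    by (rule prox_objective_minimizer_stationary[where G = G, OF diff gam])
qed

lemma prox_quadratic_growth:
  fixes \<phi> :: "'a::real_inner \<Rightarrow> real" and G :: "'a \<Rightarrow> 'a"
  assumes sc: "\<And>x y. \<phi> y + G y \<bullet> (x - y) + \<mu> / 2 * (norm (x - y))\<^sup>2 \<le> \<phi> x"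
    and mu: "\<mu> \<ge> 0" and gam: "\<gamma> > 0"
    and stationary: "p + \<gamma> *\<^sub>R G p = y"
  shows "\<phi> p + 1 / (2 * \<gamma>) * (norm (p - y))\<^sup>2 + 1 / (2 * \<gamma>) * (norm (z - p))\<^sup>2
         \<le> \<phi> z + 1 / (2 * \<gamma>) * (norm (z - y))\<^sup>2"
proof -
  define t where "t = (z - p) \<bullet> (p - y)"
  have "G p = - (1 / \<gamma>) *\<^sub>R (p - y)"
    using stationary gam by (auto simp: algebra_simps)
  then have "G p \<bullet> (z - p) = - (t / \<gamma>)"
    by (simp add: t_def inner_commute)
  moreover have "\<phi> p + G p \<bullet> (z - p) + \<mu> / 2 * (norm (z - p))\<^sup>2 \<le> \<phi> z" by (rule sc)
  moreover have "1 / (2 * \<gamma>) * (norm (z - y))\<^sup>2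
      = 1 / (2 * \<gamma>) * (norm (z - p))\<^sup>2 + t / \<gamma> + 1 / (2 * \<gamma>) * (norm (p - y))\<^sup>2"
    using power2_norm_add[of "z - p" "p - y"] gam by (simp add: t_def field_simps)
  moreover have "0 \<le> \<mu> / 2 * (norm (z - p))\<^sup>2" using mu by simp
  ultimately show ?thesis by linarith
qed

lemma prox_dist_le:
  fixes \<phi> :: "'a::euclidean_space \<Rightarrow> real" and G :: "'a \<Rightarrow> 'a"
  assumes sc: "\<And>x y. \<phi> y + G y \<bullet> (x - y) + \<mu> / 2 * (norm (x - y))\<^sup>2 \<le> \<phi> x"
    and diff: "\<And>x. (\<phi> has_derivative (\<lambda>h. G x \<bullet> h)) (at x)"
    and mu: "\<mu> > 0" and gam: "\<gamma> > 0"
  shows "(norm (prox \<gamma> \<phi> y - q))\<^sup>2 \<le> (norm (y - (q + \<gamma> *\<^sub>R G q)))\<^sup>2 / (1 + \<gamma> * \<mu>)\<^sup>2"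
proof -
  define p where "p = prox \<gamma> \<phi> y"
  define r where "r = y - (q + \<gamma> *\<^sub>R G q)"
  have pos: "1 + \<gamma> * \<mu> > 0" using gam mu by (simp add: add_pos_pos)
  have "r = (p - q) + \<gamma> *\<^sub>R (G p - G q)"
    using prox_add_gradient[OF sc diff mu gam, of y] by (simp add: r_def p_def algebra_simps)
  then have "r \<bullet> (p - q) = (norm (p - q))\<^sup>2 + \<gamma> * ((G p - G q) \<bullet> (p - q))"
    by (simp add: inner_add_left power2_norm_eq_inner)
  moreover have "\<gamma> * (\<mu> * (norm (p - q))\<^sup>2) \<le> \<gamma> * ((G p - G q) \<bullet> (p - q))"
    using strongly_convex_gradient_monotone[OF sc] gam by (simp add: mult_left_mono)
  moreover have "r \<bullet> (p - q) \<le> norm r * norm (p - q)" by (rule norm_cauchy_schwarz)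
  ultimately have "(1 + \<gamma> * \<mu>) * (norm (p - q) * norm (p - q)) \<le> norm r * norm (p - q)"
    by (simp add: algebra_simps power2_eq_square)
  then have "(1 + \<gamma> * \<mu>) * norm (p - q) \<le> norm r"
    by (cases "norm (p - q) = 0") (auto simp: mult.assoc[symmetric])
  then have "((1 + \<gamma> * \<mu>) * norm (p - q))\<^sup>2 \<le> (norm r)\<^sup>2"
    using pos by (intro power_mono) auto
  then show ?thesis
    using pos by (simp add: p_def r_def pos_le_divide_eq power_mult_distrib mult.commute)
qed

lemma dense_sequence_hits_sublevel_halfspace:
  fixes \<psi> :: "'a::euclidean_space \<Rightarrow> real" and q :: "nat \<Rightarrow> 'a"
  assumes cont: "continuous_on UNIV \<psi>"
    and dense: "\<And>X. open X \<Longrightarrow> X \<noteq> {} \<Longrightarrow> \<exists>m. q m \<in> X"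
    and e: "e > 0" and i: "i \<in> Basis" and b: "p \<bullet> i \<le> b"
  shows "\<exists>m. q m \<bullet> i < b \<and> \<psi> (q m) < \<psi> p + e"
proof -
  have "open {z. \<psi> z < \<psi> p + e}"
    by (rule open_Collect_less) (auto intro: cont continuous_intros)
  moreover have "p \<in> {z. \<psi> z < \<psi> p + e}" using e by simp
  ultimately obtain r where r: "r > 0" "ball p r \<subseteq> {z. \<psi> z < \<psi> p + e}"
    using open_contains_ball by blast
  define X where "X = ball p r \<inter> {z. z \<bullet> i < b}"
  have "open X" unfolding X_def by (intro open_Int open_ball open_halfspace_component_lt)
  moreover have "p - (r / 2) *\<^sub>R i \<in> X"
    using r b i unfolding X_def by (auto simp: dist_norm inner_diff_left)
  ultimately obtain m where "q m \<in> X" using dense by blast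
  then show ?thesis using r unfolding X_def by blast
qed

text \<open>Along a dense sequence, the coordinates of a minimizer with quadratic growth are
  determined by countably many function values; this is what makes the proximal map
  measurable in its parameters.\<close>
lemma minimizer_component_le_iff:
  fixes \<psi> :: "'a::euclidean_space \<Rightarrow> real" and q :: "nat \<Rightarrow> 'a"
  assumes cont: "continuous_on UNIV \<psi>"
    and dense: "\<And>X. open X \<Longrightarrow> X \<noteq> {} \<Longrightarrow> \<exists>m. q m \<in> X"
    and c: "c > 0" and growth: "\<And>z. \<psi> p + c * (norm (z - p))\<^sup>2 \<le> \<psi> z"
    and i: "i \<in> Basis"
  shows "p \<bullet> i \<le> a \<longleftrightarrow>
    (\<forall>n. \<exists>m. q m \<bullet> i < a \<and> (\<forall>m'. \<psi> (q m) \<le> \<psi> (q m') + 1 / real (Suc n)))"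
proof
  have min: "\<psi> p \<le> \<psi> z" for z
  proof -
    have "0 \<le> c * (norm (z - p))\<^sup>2" using c by simp
    then show ?thesis using growth[of z] by linarith
  qed
  assume "p \<bullet> i \<le> a"
  show "\<forall>n. \<exists>m. q m \<bullet> i < a \<and> (\<forall>m'. \<psi> (q m) \<le> \<psi> (q m') + 1 / real (Suc n))"
  proof
    fix n
    obtain m where m: "q m \<bullet> i < a" "\<psi> (q m) < \<psi> p + 1 / real (Suc n)"
      using dense_sequence_hits_sublevel_halfspace[OF cont dense _ i \<open>p \<bullet> i \<le> a\<close>,
          where e = "1 / real (Suc n)"]
      by auto
    moreover have "\<psi> (q m) \<le> \<psi> (q m') + 1 / real (Suc n)" for m'
      using min[of "q m'"] m(2) by linarith
    ultimately show "\<exists>m. q m \<bullet> i < a \<and> (\<forall>m'. \<psi> (q m) \<le> \<psi> (q m') + 1 / real (Suc n))"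
      by blast
  qed
next
  assume approx: "\<forall>n. \<exists>m. q m \<bullet> i < a \<and> (\<forall>m'. \<psi> (q m) \<le> \<psi> (q m') + 1 / real (Suc n))"
  show "p \<bullet> i \<le> a"
  proof (rule ccontr)
    assume "\<not> p \<bullet> i \<le> a"
    define d where "d = p \<bullet> i - a"
    have d: "d > 0" using \<open>\<not> p \<bullet> i \<le> a\<close> by (simp add: d_def)
    then have cd: "c * d\<^sup>2 / 2 > 0" using c by simp
    obtain n where "inverse (real (Suc n)) < c * d\<^sup>2 / 2"
      using reals_Archimedean[OF cd] by blast
    then have n: "1 / real (Suc n) < c * d\<^sup>2 / 2" by (simp add: inverse_eq_divide)
    obtain m where m: "q m \<bullet> i < a" "\<forall>m'. \<psi> (q m) \<le> \<psi> (q m') + 1 / real (Suc n)"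
      using approx by blast
    obtain m' where m': "\<psi> (q m') < \<psi> p + c * d\<^sup>2 / 2"
      using dense_sequence_hits_sublevel_halfspace[OF cont dense cd i, where p = p and b = "p \<bullet> i + 1"]
      by auto
    have "d < (p - q m) \<bullet> i" using m(1) by (simp add: d_def inner_diff_left)
    also have "\<dots> \<le> norm (q m - p)"
      using Basis_le_norm[OF i, of "p - q m"] by (simp add: norm_minus_commute)
    finally have "c * d\<^sup>2 < c * (norm (q m - p))\<^sup>2"
      using c d by (intro mult_strict_left_mono power_strict_mono) simp_all
    then show False using growth[of "q m"] m(2)[rule_format, of m'] m' n by linarith
  qed
qed

lemma sppm_gc_cong:
  assumes "\<And>j. j < k \<Longrightarrow> \<omega> j = \<omega>' j"
  shows "sppm_gc F gradF gradf \<gamma> x0 \<omega> k = sppm_gc F gradF gradf \<gamma> x0 \<omega>' k"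
  using assms by (induction k) (auto simp: Let_def)

lemma
  fixes f :: "'a \<Rightarrow> real"
  assumes f: "f \<in> borel_measurable M" and nn: "\<And>x. f x \<ge> 0" and c: "c \<ge> 0"
    and bound: "(\<integral>\<^sup>+x. ennreal (f x) \<partial>M) \<le> ennreal c"
  shows integrable_of_nn_integral_le: "integrable M f"
    and integral_le_of_nn_integral_le: "(\<integral>x. f x \<partial>M) \<le> c"
proof -
  show "integrable M f"
    using f nn bound by (intro integrableI_bounded) (auto simp: le_less_trans)
  then have "ennreal (\<integral>x. f x \<partial>M) \<le> ennreal c"
    using bound nn by (subst nn_integral_eq_integral[symmetric]) auto
  then show "(\<integral>x. f x \<partial>M) \<le> c"
    using c by (simp add: ennreal_le_iff)
qed

lemma (in prob_space) expectation_norm_add_scaleR_mean_zero: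
  fixes v :: "'a \<Rightarrow> 'v::euclidean_space"
  assumes v_int: "integrable M v" and v_sq_int: "integrable M (\<lambda>x. (norm (v x))\<^sup>2)"
    and v_mean: "expectation v = 0"
  shows "expectation (\<lambda>x. (norm (u + t *\<^sub>R v x))\<^sup>2) = (norm u)\<^sup>2 + t\<^sup>2 * expectation (\<lambda>x. (norm (v x))\<^sup>2)"
  using v_int v_sq_int v_mean prob_space by (simp add: power2_norm_add power_mult_distrib)

locale sppm_gc_setting = prob_space D
  for D :: "'b measure"
    and F :: "'b \<Rightarrow> 'a::euclidean_space \<Rightarrow> real"
    and gradF :: "'b \<Rightarrow> 'a \<Rightarrow> 'a"
    and gradf :: "'a \<Rightarrow> 'a"
    and \<mu> \<gamma> :: real +
  assumes F_meas: "(\<lambda>(\<xi>, x). F \<xi> x) \<in> borel_measurable (D \<Otimes>\<^sub>M borel)"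
    and gradF_meas: "(\<lambda>(\<xi>, x). gradF \<xi> x) \<in> borel_measurable (D \<Otimes>\<^sub>M borel)"
    and F_diff: "\<And>\<xi> x. \<xi> \<in> space D \<Longrightarrow> (F \<xi> has_derivative (\<lambda>h. gradF \<xi> x \<bullet> h)) (at x)"
    and F_sconv: "\<And>\<xi> x y. \<xi> \<in> space D \<Longrightarrow>
        F \<xi> y + gradF \<xi> y \<bullet> (x - y) + \<mu> / 2 * (norm (x - y))\<^sup>2 \<le> F \<xi> x"
    and mu_pos: "\<mu> > 0"
    and gamma_pos: "\<gamma> > 0"
    and gradF_int: "\<And>x. integrable D (\<lambda>\<xi>. gradF \<xi> x)"
    and gradf_def: "\<And>x. gradf x = (\<integral>\<xi>. gradF \<xi> x \<partial>D)"
begin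

lemma prox_measurable: "(\<lambda>(\<xi>, y). prox \<gamma> (F \<xi>) y) \<in> borel_measurable (D \<Otimes>\<^sub>M borel)"
proof -
  obtain Q :: "'a set" where "countable Q" and Q: "\<And>X. open X \<Longrightarrow> X \<noteq> {} \<Longrightarrow> \<exists>d\<in>Q. d \<in> X"
    using countable_dense_exists by blast
  have dense: "\<exists>m. from_nat_into Q m \<in> X" if "open X" "X \<noteq> {}" for X
    using Q[OF that] from_nat_into_surj[OF \<open>countable Q\<close>] by metis
  define c where "c = 1 / (2 * \<gamma>)"
  have c: "c > 0" using gamma_pos by (simp add: c_def)
  define \<psi> where "\<psi> \<xi> y z = F \<xi> z + c * (norm (z - y))\<^sup>2" for \<xi> y z
  define P where "P = (\<lambda>(\<xi>, y). prox \<gamma> (F \<xi>) y)"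
  define approx :: "'a \<Rightarrow> real \<Rightarrow> 'b \<times> 'a \<Rightarrow> bool" where "approx i a w \<longleftrightarrow> (\<forall>n. \<exists>m. from_nat_into Q m \<bullet> i < a \<and>
      (\<forall>m'. \<psi> (fst w) (snd w) (from_nat_into Q m)
        \<le> \<psi> (fst w) (snd w) (from_nat_into Q m') + 1 / real (Suc n)))" for i a w
  have "(\<lambda>w. \<psi> (fst w) (snd w) z) \<in> borel_measurable (D \<Otimes>\<^sub>M borel)" for z
  proof -
    have "(\<lambda>w. (fst w, z)) \<in> measurable (D \<Otimes>\<^sub>M borel) (D \<Otimes>\<^sub>M borel)" by measurable
    from measurable_compose[OF this F_meas]
    have "(\<lambda>w. F (fst w) z) \<in> borel_measurable (D \<Otimes>\<^sub>M borel)" by simp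
    then show ?thesis unfolding \<psi>_def by measurable
  qed
  then have approx_meas: "{w \<in> space (D \<Otimes>\<^sub>M borel). approx i a w} \<in> sets (D \<Otimes>\<^sub>M borel)" for i a
    unfolding approx_def by measurable
  have component_le_iff: "P (\<xi>, y) \<bullet> i \<le> a \<longleftrightarrow> approx i a (\<xi>, y)"
    if "\<xi> \<in> space D" "i \<in> Basis" for \<xi> y i a
    unfolding P_def approx_def prod.case fst_conv snd_conv
  proof (rule minimizer_component_le_iff[OF _ dense c _ \<open>i \<in> Basis\<close>])
    note sc = F_sconv[OF \<open>\<xi> \<in> space D\<close>] and diff = F_diff[OF \<open>\<xi> \<in> space D\<close>]
    have "continuous_on UNIV (F \<xi>)"
      by (rule has_derivative_continuous_on) (use diff in auto)
    then show "continuous_on UNIV (\<psi> \<xi> y)"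
      unfolding \<psi>_def by (intro continuous_intros)
    show "\<psi> \<xi> y (prox \<gamma> (F \<xi>) y) + c * (norm (z - prox \<gamma> (F \<xi>) y))\<^sup>2 \<le> \<psi> \<xi> y z" for z
      using prox_quadratic_growth[OF sc less_imp_le[OF mu_pos] gamma_pos
          prox_add_gradient[OF sc diff mu_pos gamma_pos, of y], of z]
      unfolding \<psi>_def c_def by linarith
  qed
  have "P \<in> borel_measurable (D \<Otimes>\<^sub>M borel)"
    unfolding borel_measurable_iff_halfspace_le
  proof (intro ballI allI)
    fix i :: 'a and a assume "i \<in> Basis"
    have "{w \<in> space (D \<Otimes>\<^sub>M borel). P w \<bullet> i \<le> a} = {w \<in> space (D \<Otimes>\<^sub>M borel). approx i a w}"
    proof (intro Collect_cong conj_cong refl)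
      fix w :: "'b \<times> 'a" assume "w \<in> space (D \<Otimes>\<^sub>M borel)"
      then obtain \<xi> y where "w = (\<xi>, y)" "\<xi> \<in> space D" by (auto simp: space_pair_measure)
      then show "P w \<bullet> i \<le> a \<longleftrightarrow> approx i a w"
        using component_le_iff \<open>i \<in> Basis\<close> by simp
    qed
    with approx_meas show "{w \<in> space (D \<Otimes>\<^sub>M borel). P w \<bullet> i \<le> a} \<in> sets (D \<Otimes>\<^sub>M borel)"
      by simp
  qed
  then show ?thesis by (simp add: P_def)
qed

lemma gradF_measurable: "(\<lambda>\<xi>. gradF \<xi> x) \<in> borel_measurable D"
proof -
  have "(\<lambda>\<xi>. (\<xi>, x)) \<in> measurable D (D \<Otimes>\<^sub>M borel)" by measurable
  from measurable_compose[OF this gradF_meas] show ?thesis by simp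
qed

lemma gradf_measurable: "gradf \<in> borel_measurable borel"
proof -
  have "(\<lambda>w. (snd w, fst w)) \<in> measurable (borel \<Otimes>\<^sub>M D) (D \<Otimes>\<^sub>M borel)" by measurable
  from measurable_compose[OF this gradF_meas]
  have "(\<lambda>(x, \<xi>). gradF \<xi> x) \<in> borel_measurable (borel \<Otimes>\<^sub>M D)" by (simp add: case_prod_beta)
  then have "(\<lambda>x. \<integral>\<xi>. gradF \<xi> x \<partial>D) \<in> borel_measurable borel"
    by (rule borel_measurable_lebesgue_integral)
  then show ?thesis by (simp add: gradf_def[abs_def])
qed

lemma sppm_gc_measurable:
  assumes "{..<k} \<subseteq> I"
  shows "(\<lambda>\<omega>. sppm_gc F gradF gradf \<gamma> x0 \<omega> k) \<in> borel_measurable (PiM I (\<lambda>_. D))"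
  using assms
proof (induction k)
  case 0
  then show ?case by simp
next
  case (Suc k)
  let ?x = "\<lambda>\<omega>. sppm_gc F gradF gradf \<gamma> x0 \<omega> k"
  have x: "?x \<in> borel_measurable (PiM I (\<lambda>_. D))" using Suc by (simp add: lessThan_Suc)
  have \<xi>: "(\<lambda>\<omega>. \<omega> k) \<in> measurable (PiM I (\<lambda>_. D)) D"
    using Suc.prems by (intro measurable_component_singleton) auto
  have "(\<lambda>\<omega>. gradF (\<omega> k) (?x \<omega>)) \<in> borel_measurable (PiM I (\<lambda>_. D))"
    using measurable_compose[OF measurable_Pair[OF \<xi> x] gradF_meas] by simp
  moreover have "(\<lambda>\<omega>. gradf (?x \<omega>)) \<in> borel_measurable (PiM I (\<lambda>_. D))"
    using measurable_compose[OF x gradf_measurable] .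
  ultimately have "(\<lambda>\<omega>. (\<omega> k, ?x \<omega> + \<gamma> *\<^sub>R (gradF (\<omega> k) (?x \<omega>) - gradf (?x \<omega>))))
      \<in> measurable (PiM I (\<lambda>_. D)) (D \<Otimes>\<^sub>M borel)"
    using \<xi> x by measurable
  from measurable_compose[OF this prox_measurable] show ?case by (simp add: Let_def)
qed

text \<open>The noise v has mean zero because gradf xs = 0, so the cross term drops out in
  expectation.\<close>
lemma expected_step_le:
  assumes gradf_xs: "gradf xs = 0"
    and grad_sim: "(\<integral>\<^sup>+\<xi>. ennreal ((norm (gradF \<xi> z - gradf z - gradF \<xi> xs))\<^sup>2) \<partial>D)
                        \<le> ennreal (\<delta>\<^sup>2 * (norm (z - xs))\<^sup>2)"
  shows "(\<integral>\<^sup>+\<xi>. ennreal ((norm (prox \<gamma> (F \<xi>) (z + \<gamma> *\<^sub>R (gradF \<xi> z - gradf z)) - xs))\<^sup>2) \<partial>D)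
         \<le> ennreal ((1 + \<gamma>\<^sup>2 * \<delta>\<^sup>2) / (1 + \<gamma> * \<mu>)\<^sup>2 * (norm (z - xs))\<^sup>2)"
proof -
  define K where "K = (1 + \<gamma> * \<mu>)\<^sup>2"
  have K: "K > 0"
    unfolding K_def using gamma_pos mu_pos by (intro zero_less_power add_pos_pos mult_pos_pos) simp_all
  define u where "u = z - xs"
  define v where "v \<xi> = gradF \<xi> z - gradf z - gradF \<xi> xs" for \<xi>
  define g where "g \<xi> = (norm (u + \<gamma> *\<^sub>R v \<xi>))\<^sup>2" for \<xi>
  have v_int: "integrable D v" unfolding v_def using gradF_int by auto
  have v_mean: "(\<integral>\<xi>. v \<xi> \<partial>D) = 0"
    unfolding v_def using gradF_int by (simp add: gradf_def[symmetric] gradf_xs prob_space)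
  have "(\<lambda>\<xi>. (norm (v \<xi>))\<^sup>2) \<in> borel_measurable D"
    unfolding v_def using gradF_measurable by measurable
  moreover have "(\<integral>\<^sup>+\<xi>. ennreal ((norm (v \<xi>))\<^sup>2) \<partial>D) \<le> ennreal (\<delta>\<^sup>2 * (norm u)\<^sup>2)"
    using grad_sim by (simp add: v_def u_def)
  ultimately have v_sq_int: "integrable D (\<lambda>\<xi>. (norm (v \<xi>))\<^sup>2)"
    and v_sq: "(\<integral>\<xi>. (norm (v \<xi>))\<^sup>2 \<partial>D) \<le> \<delta>\<^sup>2 * (norm u)\<^sup>2"
    by (auto intro!: integrable_of_nn_integral_le[where c = "\<delta>\<^sup>2 * (norm u)\<^sup>2"]
        integral_le_of_nn_integral_le)
  from mult_left_mono[OF v_sq, of "\<gamma>\<^sup>2"]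
  have g_mean: "(\<integral>\<xi>. g \<xi> \<partial>D) \<le> (1 + \<gamma>\<^sup>2 * \<delta>\<^sup>2) * (norm u)\<^sup>2"
    unfolding g_def expectation_norm_add_scaleR_mean_zero[OF v_int v_sq_int v_mean]
    by (simp add: algebra_simps)
  have g_int: "integrable D (\<lambda>\<xi>. g \<xi> / K)"
    unfolding g_def power2_norm_add using v_int v_sq_int by (auto simp: power_mult_distrib)
  have pointwise: "(norm (prox \<gamma> (F \<xi>) (z + \<gamma> *\<^sub>R (gradF \<xi> z - gradf z)) - xs))\<^sup>2 \<le> g \<xi> / K"
    if "\<xi> \<in> space D" for \<xi>
  proof -
    have "z + \<gamma> *\<^sub>R (gradF \<xi> z - gradf z) - (xs + \<gamma> *\<^sub>R gradF \<xi> xs) = u + \<gamma> *\<^sub>R v \<xi>"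
      by (simp add: u_def v_def algebra_simps)
    with prox_dist_le[OF F_sconv[OF that] F_diff[OF that] mu_pos gamma_pos,
        of "z + \<gamma> *\<^sub>R (gradF \<xi> z - gradf z)" xs]
    show ?thesis by (simp add: g_def K_def)
  qed
  have "(\<integral>\<^sup>+\<xi>. ennreal ((norm (prox \<gamma> (F \<xi>) (z + \<gamma> *\<^sub>R (gradF \<xi> z - gradf z)) - xs))\<^sup>2) \<partial>D)
        \<le> (\<integral>\<^sup>+\<xi>. ennreal (g \<xi> / K) \<partial>D)"
    by (rule nn_integral_mono) (use pointwise in \<open>auto intro: ennreal_leI\<close>)
  also have "\<dots> = ennreal (\<integral>\<xi>. g \<xi> / K \<partial>D)"
    using g_int K by (intro nn_integral_eq_integral) (auto simp: g_def)
  also have "(\<integral>\<xi>. g \<xi> / K \<partial>D) = (\<integral>\<xi>. g \<xi> \<partial>D) / K" by simp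
  also have "\<dots> \<le> ennreal ((1 + \<gamma>\<^sup>2 * \<delta>\<^sup>2) / (1 + \<gamma> * \<mu>)\<^sup>2 * (norm (z - xs))\<^sup>2)"
    using g_mean K by (intro ennreal_leI) (simp add: K_def u_def divide_right_mono)
  finally show ?thesis .
qed

lemma product_prob_space_nat: "product_prob_space (\<lambda>_::nat. D)"
  by (intro product_prob_spaceI) unfold_locales

lemma expected_sppm_gc_le_finite:
  assumes gradf_xs: "gradf xs = 0"
    and grad_sim: "\<And>x. (\<integral>\<^sup>+\<xi>. ennreal ((norm (gradF \<xi> x - gradf x - gradF \<xi> xs))\<^sup>2) \<partial>D)
                        \<le> ennreal (\<delta>\<^sup>2 * (norm (x - xs))\<^sup>2)"
  shows "(\<integral>\<^sup>+\<omega>. ennreal ((norm (sppm_gc F gradF gradf \<gamma> x0 \<omega> k - xs))\<^sup>2) \<partial>PiM {..<k} (\<lambda>_. D))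
    \<le> ennreal (((1 + \<gamma>\<^sup>2 * \<delta>\<^sup>2) / (1 + \<gamma> * \<mu>)\<^sup>2) ^ k * (norm (x0 - xs))\<^sup>2)"
proof (induction k)
  case 0
  interpret P0: prob_space "PiM ({}::nat set) (\<lambda>_. D)"
    by (rule prob_space_PiM) (rule prob_space_axioms)
  show ?case by (simp add: P0.emeasure_space_1)
next
  case (Suc k)
  interpret P: product_prob_space "\<lambda>_::nat. D" UNIV by (rule product_prob_space_nat)
  define c where "c = (1 + \<gamma>\<^sup>2 * \<delta>\<^sup>2) / (1 + \<gamma> * \<mu>)\<^sup>2"
  have "c \<ge> 0" unfolding c_def by simp
  let ?x = "sppm_gc F gradF gradf \<gamma> x0"
  have step: "?x (fun_upd \<omega> k \<xi>) (Suc k)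
      = prox \<gamma> (F \<xi>) (?x \<omega> k + \<gamma> *\<^sub>R (gradF \<xi> (?x \<omega> k) - gradf (?x \<omega> k)))" for \<omega> \<xi>
  proof -
    have "?x (fun_upd \<omega> k \<xi>) k = ?x \<omega> k" by (rule sppm_gc_cong) simp
    then show ?thesis by (simp add: Let_def)
  qed
  have "(\<integral>\<^sup>+\<omega>. ennreal ((norm (?x \<omega> (Suc k) - xs))\<^sup>2) \<partial>PiM {..<Suc k} (\<lambda>_. D))
      = (\<integral>\<^sup>+\<omega>. (\<integral>\<^sup>+\<xi>. ennreal ((norm (?x (fun_upd \<omega> k \<xi>) (Suc k) - xs))\<^sup>2) \<partial>D) \<partial>PiM {..<k} (\<lambda>_. D))"
    unfolding lessThan_Suc
    by (rule P.product_nn_integral_insert)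
      (use sppm_gc_measurable[of "Suc k" "insert k {..<k}"] in \<open>auto simp: lessThan_Suc\<close>)
  also have "\<dots> \<le> (\<integral>\<^sup>+\<omega>. ennreal (c * (norm (?x \<omega> k - xs))\<^sup>2) \<partial>PiM {..<k} (\<lambda>_. D))"
    unfolding step c_def by (intro nn_integral_mono expected_step_le[OF gradf_xs grad_sim])
  also have "\<dots> = ennreal c * (\<integral>\<^sup>+\<omega>. ennreal ((norm (?x \<omega> k - xs))\<^sup>2) \<partial>PiM {..<k} (\<lambda>_. D))"
    using sppm_gc_measurable[of k "{..<k}"] \<open>c \<ge> 0\<close>
    by (subst nn_integral_cmult[symmetric]) (auto simp: ennreal_mult)
  also have "\<dots> \<le> ennreal c * ennreal (c ^ k * (norm (x0 - xs))\<^sup>2)"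
    using Suc.IH unfolding c_def by (rule mult_left_mono) simp
  also have "\<dots> = ennreal (c ^ Suc k * (norm (x0 - xs))\<^sup>2)"
    using \<open>c \<ge> 0\<close> by (simp add: ennreal_mult[symmetric] mult.assoc)
  finally show ?case unfolding c_def .
qed

lemma nn_integral_sppm_gc_PiM_UNIV:
  assumes h: "h \<in> borel_measurable borel"
  shows "(\<integral>\<^sup>+\<omega>. h (sppm_gc F gradF gradf \<gamma> x0 \<omega> k) \<partial>PiM UNIV (\<lambda>_::nat. D))
       = (\<integral>\<^sup>+\<omega>. h (sppm_gc F gradF gradf \<gamma> x0 \<omega> k) \<partial>PiM {..<k} (\<lambda>_. D))"
proof -
  interpret P: product_prob_space "\<lambda>_::nat. D" UNIV by (rule product_prob_space_nat)
  let ?x = "sppm_gc F gradF gradf \<gamma> x0"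
  have meas: "(\<lambda>\<omega>. h (?x \<omega> k)) \<in> borel_measurable (PiM {..<k} (\<lambda>_. D))"
    using measurable_compose[OF sppm_gc_measurable h] by simp
  have "(\<integral>\<^sup>+\<omega>. h (?x \<omega> k) \<partial>PiM {..<k} (\<lambda>_. D))
      = (\<integral>\<^sup>+\<omega>. h (?x \<omega> k) \<partial>distr (PiM UNIV (\<lambda>_. D)) (PiM {..<k} (\<lambda>_. D)) (\<lambda>\<omega>. restrict \<omega> {..<k}))"
    by (subst P.distr_PiM_restrict_finite) auto
  also have "\<dots> = (\<integral>\<^sup>+\<omega>. h (?x (restrict \<omega> {..<k}) k) \<partial>PiM UNIV (\<lambda>_. D))"
    by (rule nn_integral_distr) (use meas in \<open>auto intro: measurable_restrict_subset\<close>)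
  also have "\<dots> = (\<integral>\<^sup>+\<omega>. h (?x \<omega> k) \<partial>PiM UNIV (\<lambda>_. D))"
  proof -
    have "?x (restrict \<omega> {..<k}) k = ?x \<omega> k" for \<omega> by (rule sppm_gc_cong) simp
    then show ?thesis by simp
  qed
  finally show ?thesis by simp
qed

end

theorem mainTheorem7:
  fixes D :: "'b measure"
    and F :: "'b \<Rightarrow> 'a::euclidean_space \<Rightarrow> real"
    and gradF :: "'b \<Rightarrow> 'a \<Rightarrow> 'a"
    and f :: "'a \<Rightarrow> real" and gradf :: "'a \<Rightarrow> 'a"
    and \<mu> \<delta> \<gamma> :: real and xs x0 :: 'a and k :: nat
  assumes D: "prob_space D"
    and F_meas: "(\<lambda>(\<xi>, x). F \<xi> x) \<in> borel_measurable (D \<Otimes>\<^sub>M borel)"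
    and gradF_meas: "(\<lambda>(\<xi>, x). gradF \<xi> x) \<in> borel_measurable (D \<Otimes>\<^sub>M borel)"
    and F_diff: "\<And>\<xi> x. \<xi> \<in> space D \<Longrightarrow> (F \<xi> has_derivative (\<lambda>h. gradF \<xi> x \<bullet> h)) (at x)"
    and mu_pos: "\<mu> > 0"
    and F_sconv: "\<And>\<xi> x y. \<xi> \<in> space D \<Longrightarrow>
        F \<xi> y + gradF \<xi> y \<bullet> (x - y) + \<mu> / 2 * (norm (x - y))\<^sup>2 \<le> F \<xi> x"
    and F_int: "\<And>x. integrable D (\<lambda>\<xi>. F \<xi> x)"
    and f_def: "\<And>x. f x = (\<integral>\<xi>. F \<xi> x \<partial>D)"
    and f_diff: "\<And>x. (f has_derivative (\<lambda>h. gradf x \<bullet> h)) (at x)"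
    and gradF_int: "\<And>x. integrable D (\<lambda>\<xi>. gradF \<xi> x)"
    and gradf_def: "\<And>x. gradf x = (\<integral>\<xi>. gradF \<xi> x \<partial>D)"
    and xs_min: "\<And>x. f xs \<le> f x"
    and delta_nonneg: "\<delta> \<ge> 0"
    and grad_sim: "\<And>x. (\<integral>\<^sup>+\<xi>. ennreal ((norm (gradF \<xi> x - gradf x - gradF \<xi> xs))\<^sup>2) \<partial>D)
                        \<le> ennreal (\<delta>\<^sup>2 * (norm (x - xs))\<^sup>2)"
    and gamma_pos: "\<gamma> > 0"
  shows "(\<integral>\<^sup>+\<omega>. ennreal ((norm (sppm_gc F gradF gradf \<gamma> x0 \<omega> k - xs))\<^sup>2)
            \<partial>(PiM UNIV (\<lambda>_::nat. D)))
         \<le> ennreal (((1 + \<gamma>\<^sup>2 * \<delta>\<^sup>2) / (1 + \<gamma> * \<mu>)\<^sup>2) ^ k * (norm (x0 - xs))\<^sup>2)"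
proof -
  interpret sppm_gc_setting D F gradF gradf \<mu> \<gamma>
    using D F_meas gradF_meas F_diff F_sconv mu_pos gamma_pos gradF_int gradf_def
    by (simp add: sppm_gc_setting_def sppm_gc_setting_axioms_def)
  \<comment> \<open>f enters only through the optimality of xs.\<close>
  have "(\<lambda>h. gradf xs \<bullet> h) = (\<lambda>h. 0)"
    by (rule differential_zero_maxmin[OF UNIV_I open_UNIV f_diff]) (use xs_min in auto)
  then have "gradf xs \<bullet> gradf xs = 0" by (rule fun_cong)
  then have gradf_xs: "gradf xs = 0" by simp
  have "(\<lambda>x. ennreal ((norm (x - xs))\<^sup>2)) \<in> borel_measurable borel" by measurable
  from nn_integral_sppm_gc_PiM_UNIV[OF this, where ?x0.0 = x0 and k = k]
    expected_sppm_gc_le_finite[OF gradf_xs grad_sim, where ?x0.0 = x0 and k = k]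
  show ?thesis by simp
qed

end
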